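(* Let $m\ge 0$ and $n\ge 1$ be integers. For $0\le s\le m$ define $$P_{m,s}(q)=\frac{\prod_{j=0}^{s}(1-q^{m+1-j})}{(1-q)^{3s}}\sum_{k=0}^{s}\frac{(-1)^{s-k}}{1-q^{m+1-k}}\left[\binom{2m}{k}-\binom{2m}{k-2}\right]\sum_{i=0}^{s-k}\frac{m-k+1}{m-s+1}\binom{m-s+i}{i}\binom{m-k-i}{s-k-i}q^{s-k-i}.$$ Then each $P_{m,s}(q)$ is a polynomial in $\mathbb{Z}[q]$, and $$S_{2m+1,n}(q)=\sum_{k=0}^{m}(-1)^kP_{m,k}(q)\frac{(1-q^n)^{m+1-k}(1-q^{n+1})^{m+1-k}q^{kn}}{(1-q^2)(1-q)^{2m-3k}\prod_{i=0}^{k}(1-q^{m+1-i})}.$$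
   Context: $q$ is an indeterminate and $q^{1/2}$ a fixed formal square root of $q$; identities are identities of rational functions in $q^{1/2}$. For integers $m,n\ge1$, $$S_{m,n}(q)=\sum_{k=1}^{n}\frac{1-q^{2k}}{1-q^2}\left(\frac{1-q^k}{1-q}\right)^{m-1}q^{\frac{m+1}{2}(n-k)}.$$ Binomial coefficients $\binom{a}{b}$ with integers $a,b$ are taken to be $0$ when $b<0$ or when $0\le a<b$. *)

theory Defs
  imports "HOL-Computational_Algebra.Computational_Algebra"
begin

text \<open>We work in the field of rational functions in the formal square root
  t = q^(1/2), i.e. the fraction field of Z[t]; the indeterminate q is t^2.\<close>

type_synonym rf = "int poly fract"

definition qh :: rf where "qh = to_fract [:0, 1:]"

definition qq :: rf where "qq = qh ^ 2"

text \<open>Integer binomial coefficients: 0 when b < 0 or 0 <= a < b; for a < 0 the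
  usual generalized binomial (upper negation); that case never occurs below.\<close>
definition ibinom :: "int \<Rightarrow> int \<Rightarrow> int" where
  "ibinom a b = (if b < 0 then 0
     else if 0 \<le> a then int (nat a choose nat b)
     else (-1) ^ nat b * int (nat (b - a - 1) choose nat b))"

definition S :: "nat \<Rightarrow> nat \<Rightarrow> rf" where
  "S m n = (\<Sum>k=1..n. (1 - qq ^ (2*k)) / (1 - qq ^ 2) * ((1 - qq ^ k) / (1 - qq)) ^ (m - 1)
              * qh ^ ((m + 1) * (n - k)))"

definition P :: "nat \<Rightarrow> nat \<Rightarrow> rf" where
  "P m s = (\<Prod>j=0..s. 1 - qq ^ (m + 1 - j)) / (1 - qq) ^ (3*s) *
     (\<Sum>k=0..s. (-1) ^ (s - k) / (1 - qq ^ (m + 1 - k))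
        * of_int (ibinom (2 * int m) (int k) - ibinom (2 * int m) (int k - 2))
        * (\<Sum>i=0..s-k. of_int (int m - int k + 1) / of_int (int m - int s + 1)
             * of_int (ibinom (int m - int s + int i) (int i))
             * of_int (ibinom (int m - int k - int i) (int s - int k - int i))
             * qq ^ (s - k - i)))"

definition poly_in_q :: "int poly \<Rightarrow> rf" where
  "poly_in_q p = to_fract (p \<circ>\<^sub>p [:0, 0, 1:])"

end

theory Submission
  imports Defs
begin

text \<open>
  Both sides of the identity satisfy X(n+1) = q^(m+1) X(n) + f(q^(n+1)) with
  f(u) = (1 - u^2)(1 - u)^(2m) / ((1 - q^2)(1 - q)^(2m)), and both vanish at n = 0.
  On the right-hand side, the increment of the k-th summand is u^k times
  ((1 - u)(1 - qu))^j - ((1 - u)(q - u))^j with j = m + 1 - k and u = q^(n+1), so the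
  recurrence reduces to a polynomial identity in u. That identity comes from a
  Lagrange-inversion expansion of (1 - x^N)(1 - y^N) in powers of (1 - x)(1 - y), taken at
  (x, y) = (u, qu) and (u/q, u), combined with the antisymmetry of the coefficients of
  (1 - u^2)(1 - u)^(2m).

  For integrality, divide the bracket by u^j: it becomes a^j - b^j, where a + b and ab are
  polynomials over Z[q] in w = (1 - u)^2/u, so it equals (a - b) U_j(w) for a Lucas polynomial
  U_j. The leading coefficient of U_j is [j]_q and its coefficient of w^i is divisible by
  (1 - q)^(2(j-1-i)). The identity turns into sum_k (1 - q) P_k U_(m+1-k)(w) = w^m for the
  normalised coefficients P_k, a triangular system whose solution shows that
  (1 - q) P_t [m+1]_q ... [m+1-t]_q is divisible by (1 - q)^(2t); this is exactly what
  P_(m,t) in Z[q] needs.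
\<close>

section \<open>A Lagrange-type expansion of (1 - x^N)(1 - y^N)\<close>

definition geometric_fps :: "'a::comm_ring_1 \<Rightarrow> 'a fps" where
  "geometric_fps c = Abs_fps (\<lambda>n. c ^ n)"

lemma geometric_fps_nth [simp]: "geometric_fps c $ n = c ^ n"
  by (simp add: geometric_fps_def)

lemma geometric_fps_inverse: "(1 - fps_const c * fps_X) * geometric_fps c = 1"
  by (auto simp: fps_eq_iff algebra_simps power_eq_if)

lemma fps_deriv_geometric_fps:
  "fps_deriv (geometric_fps c) = fps_const c * geometric_fps c ^ 2"
proof -
  let ?g = "geometric_fps c"
  have "fps_deriv ((1 - fps_const c * fps_X) * ?g) = 0"
    by (simp only: geometric_fps_inverse fps_deriv_1)
  then have "(1 - fps_const c * fps_X) * fps_deriv ?g = fps_const c * ?g"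
    by (simp add: algebra_simps)
  then have "?g * ((1 - fps_const c * fps_X) * fps_deriv ?g) = fps_const c * ?g ^ 2"
    by (simp add: power2_eq_square ac_simps)
  then show ?thesis
    using geometric_fps_inverse[of c] by (simp add: mult.assoc[symmetric] mult.commute[of ?g])
qed

lemma geometric_fps_power_nth:
  "(geometric_fps c ^ Suc p) $ a = of_nat ((p + a) choose a) * c ^ a"
proof (induction p arbitrary: a)
  case (Suc p)
  have "(geometric_fps c ^ Suc (Suc p)) $ a
      = (\<Sum>i=0..a. c ^ i * (of_nat ((p + (a - i)) choose (a - i)) * c ^ (a - i)))"
    by (simp only: power_Suc[of _ "Suc p"] fps_mult_nth geometric_fps_nth Suc.IH)
  also have "\<dots> = (\<Sum>i=0..a. of_nat ((p + (a - i)) choose (a - i))) * c ^ a"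
  proof -
    have "c ^ i * c ^ (a - i) = c ^ a" if "i \<in> {0..a}" for i
      using that by (simp flip: power_add)
    then show ?thesis
      unfolding sum_distrib_right by (intro sum.cong refl) (simp add: mult.left_commute[of "c ^ _"])
  qed
  also have "(\<Sum>i=0..a. of_nat ((p + (a - i)) choose (a - i))) = (of_nat (Suc (p + a) choose a) :: 'a)"
    by (subst sum.atLeastAtMost_rev) (simp add: atLeast0AtMost sum_choose_lower flip: of_nat_sum)
  finally show ?case by simp
qed simp

definition expansion_coeff :: "'a::comm_ring_1 \<Rightarrow> 'a \<Rightarrow> nat \<Rightarrow> nat \<Rightarrow> 'a" where
  "expansion_coeff x y N k =
     (\<Sum>a=0..k. of_nat ((N - 1 - k + a) choose a) * of_nat ((N - 1 - a) choose (k - a)) * x ^ a * y ^ (k - a))"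

lemma expansion_coeff_fps_nth:
  assumes "k < N"
  shows "((geometric_fps x * geometric_fps y) ^ (N - k)) $ k = expansion_coeff x y N k"
proof -
  obtain p where p: "N - k = Suc p" "p = N - 1 - k" using assms by (metis Suc_diff_Suc diff_Suc_1 diff_commute)
  have "\<And>a. a \<le> k \<Longrightarrow> p + (k - a) = N - 1 - a" using assms p by auto
  then show ?thesis
    unfolding p(1) power_mult_distrib fps_mult_nth geometric_fps_power_nth expansion_coeff_def
    by (intro sum.cong) (auto simp: p(2) ac_simps)
qed

lemma expansion_coeff_homogeneous:
  "expansion_coeff (c * x) (c * y) N k = c ^ k * expansion_coeff x y N k"
proof -
  have "(c * x) ^ a * (c * y) ^ (k - a) = c ^ k * (x ^ a * y ^ (k - a))" if "a \<in> {0..k}" for a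
  proof -
    have "(c * x) ^ a * (c * y) ^ (k - a) = (c ^ a * c ^ (k - a)) * (x ^ a * y ^ (k - a))"
      by (simp add: power_mult_distrib ac_simps)
    also have "c ^ a * c ^ (k - a) = c ^ k"
      using that by (simp flip: power_add)
    finally show ?thesis .
  qed
  then show ?thesis
    unfolding expansion_coeff_def sum_distrib_left mult.assoc
    by (intro sum.cong refl) (simp add: ac_simps)
qed

definition lagrange_fps :: "'a::comm_ring_1 \<Rightarrow> 'a \<Rightarrow> 'a fps" where
  "lagrange_fps x y = fps_X * fps_const ((1 - x) * (1 - y)) * (geometric_fps x * geometric_fps y)"

definition product_fps :: "'a::comm_ring_1 \<Rightarrow> 'a \<Rightarrow> 'a fps" where
  "product_fps x y = geometric_fps 1 - fps_const x * geometric_fps x - fps_const y * geometric_fps y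
                     + fps_const (x * y) * geometric_fps (x * y)"

lemma product_fps_nth: "product_fps x y $ n = (1 - x ^ Suc n) * (1 - y ^ Suc n)"
  by (simp add: product_fps_def algebra_simps power_mult_distrib)

lemma lagrange_fps_power_nth:
  assumes "k < N"
  shows "(lagrange_fps x y ^ (N - k)) $ N = ((1 - x) * (1 - y)) ^ (N - k) * expansion_coeff x y N k"
proof -
  have "lagrange_fps x y ^ j =
      fps_X ^ j * (fps_const (((1 - x) * (1 - y)) ^ j) * (geometric_fps x * geometric_fps y) ^ j)" for j
    by (simp add: lagrange_fps_def power_mult_distrib fps_const_power ac_simps)
  then show ?thesis
    using assms by (simp add: fps_X_power_mult_nth expansion_coeff_fps_nth)
qed

lemma lagrange_fps_equation:
  fixes x y :: "'a::idom"
  shows "(1 - lagrange_fps x y) * product_fps x y = fps_deriv (lagrange_fps x y)"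
proof -
  have ring_identity: "(1 - X * ((1 - a) * (1 - b)) * (ga * gb)) * (g1 - a * ga - b * gb + a * b * gab)
      = (1 - a) * (1 - b) * (ga * gb + X * (ga * (b * gb ^ 2) + a * ga ^ 2 * gb))"
    if "(1 - a * X) * ga = 1" "(1 - b * X) * gb = 1" "(1 - X) * g1 = 1" "(1 - a * b * X) * gab = 1"
    for X a b ga gb g1 gab :: "'a fps"
    using that by algebra
  have s: "fps_const ((1 - x) * (1 - y)) = (1 - fps_const x) * (1 - fps_const y)"
    by (simp flip: fps_const_mult fps_const_sub)
  have "fps_deriv (lagrange_fps x y) = fps_const ((1 - x) * (1 - y)) * (geometric_fps x * geometric_fps y + fps_X *
      (geometric_fps x * (fps_const y * geometric_fps y ^ 2) + fps_const x * geometric_fps x ^ 2 * geometric_fps y))"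
    by (simp add: lagrange_fps_def fps_deriv_geometric_fps algebra_simps)
  moreover have "(1 - lagrange_fps x y) * product_fps x y = fps_const ((1 - x) * (1 - y)) *
      (geometric_fps x * geometric_fps y + fps_X *
      (geometric_fps x * (fps_const y * geometric_fps y ^ 2) + fps_const x * geometric_fps x ^ 2 * geometric_fps y))"
    unfolding lagrange_fps_def product_fps_def s unfolding fps_const_mult[symmetric]
    by (rule ring_identity)
      (simp_all only: geometric_fps_inverse fps_const_mult geometric_fps_inverse[of 1, simplified])
  ultimately show ?thesis
    by simp
qed

lemma fps_nth_of_deriv_equation:
  fixes W \<Phi> :: "'a::field_char_0 fps"
  assumes equation: "(1 - W) * \<Phi> = fps_deriv W" and "W = fps_X * H" and "N \<noteq> 0"
  shows "\<Phi> $ (N - 1) = (\<Sum>p<N. of_nat N / of_nat (Suc p) * (W ^ Suc p) $ N)"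
proof -
  have "(\<Sum>p<N. W ^ p * fps_deriv W) = (\<Sum>p<N. W ^ p) * ((1 - W) * \<Phi>)"
    by (simp only: equation sum_distrib_right)
  also have "\<dots> = (1 - W ^ N) * \<Phi>"
    by (simp only: one_diff_power_eq mult_ac)
  also have "\<dots> = \<Phi> - W ^ N * \<Phi>"
    by (simp add: algebra_simps)
  finally have "\<Phi> $ (N - 1) = (\<Sum>p<N. W ^ p * fps_deriv W) $ (N - 1) + (W ^ N * \<Phi>) $ (N - 1)"
    by simp
  also have "(W ^ N * \<Phi>) $ (N - 1) = 0"
    using \<open>N \<noteq> 0\<close> by (simp add: \<open>W = fps_X * H\<close> power_mult_distrib mult.assoc fps_X_power_mult_nth)
  also have "of_nat (Suc p) * (W ^ p * fps_deriv W) $ (N - 1) = of_nat N * (W ^ Suc p) $ N" for p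
  proof -
    have "fps_deriv (W ^ Suc p) = fps_const (of_nat (Suc p)) * (W ^ p * fps_deriv W)"
      by (subst fps_deriv_power) (simp only: diff_Suc_1 mult.assoc mult.commute[of "fps_deriv W"])
    then have "of_nat (Suc p) * (W ^ p * fps_deriv W) $ (N - 1) = fps_deriv (W ^ Suc p) $ (N - 1)"
      by (simp only: fps_mult_left_const_nth)
    also have "\<dots> = of_nat N * (W ^ Suc p) $ N"
      using \<open>N \<noteq> 0\<close> by (simp only: fps_deriv_nth) simp
    finally show ?thesis .
  qed
  then have "(\<Sum>p<N. W ^ p * fps_deriv W) $ (N - 1) = (\<Sum>p<N. of_nat N / of_nat (Suc p) * (W ^ Suc p) $ N)"
    unfolding fps_sum_nth by (intro sum.cong refl) (simp add: field_simps del: of_nat_Suc)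
  finally show ?thesis
    by simp
qed

lemma one_minus_power_product_expansion:
  fixes x y :: "'a::field_char_0"
  shows "(1 - x ^ N) * (1 - y ^ N) =
    (\<Sum>k<N. of_nat N / of_nat (N - k) * ((1 - x) * (1 - y)) ^ (N - k) * expansion_coeff x y N k)"
proof (cases "N = 0")
  case False
  have "(1 - x ^ N) * (1 - y ^ N) = product_fps x y $ (N - 1)"
    using False by (simp add: product_fps_nth)
  also have "\<dots> = (\<Sum>p<N. of_nat N / of_nat (Suc p) * (lagrange_fps x y ^ Suc p) $ N)"
    using False by (intro fps_nth_of_deriv_equation lagrange_fps_equation) (simp_all add: lagrange_fps_def mult.assoc)
  also have "\<dots> = (\<Sum>k<N. of_nat N / of_nat (N - k) * (lagrange_fps x y ^ (N - k)) $ N)"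
    by (subst sum.nat_diff_reindex[symmetric]) (simp add: Suc_diff_Suc)
  finally show ?thesis
    by (simp add: lagrange_fps_power_nth mult.assoc)
qed simp

section \<open>The coefficient identity\<close>

text \<open>For u = q^(n+1), u^k * step_diff q u (m + 1 - k) is the increment of the k-th summand
  of the right-hand side of the theorem; see step_diff_shift.\<close>

definition step_diff :: "'a::comm_ring_1 \<Rightarrow> 'a \<Rightarrow> nat \<Rightarrow> 'a" where
  "step_diff q u j = ((1 - u) * (1 - q * u)) ^ j - ((1 - u) * (q - u)) ^ j"

lemma expansion_at_u_qu:
  fixes q u :: "'a::field_char_0"
  shows "(1 - u ^ N) * (1 - (q * u) ^ N) =
    (\<Sum>k<N. of_nat N / of_nat (N - k) * ((1 - u) * (1 - q * u)) ^ (N - k) * (u ^ k * expansion_coeff 1 q N k))"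
  using one_minus_power_product_expansion[where x = u and y = "u * q"] expansion_coeff_homogeneous[of u 1 q N]
  by (simp add: ac_simps)

lemma expansion_at_u_div_q:
  fixes q u :: "'a::field_char_0"
  assumes "q \<noteq> 0"
  shows "(1 - u ^ N) * (q ^ N - u ^ N) =
    (\<Sum>k<N. of_nat N / of_nat (N - k) * ((1 - u) * (q - u)) ^ (N - k) * (u ^ k * expansion_coeff 1 q N k))"
proof -
  have "(1 - u ^ N) * (q ^ N - u ^ N) = q ^ N * ((1 - (u / q) ^ N) * (1 - u ^ N))"
    using assms by (simp add: field_simps power_divide)
  also have "\<dots> = (\<Sum>k<N. of_nat N / of_nat (N - k) *
      (q ^ (N - k) * ((1 - u / q) * (1 - u)) ^ (N - k)) * (q ^ k * expansion_coeff (u / q) u N k))"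
    unfolding one_minus_power_product_expansion sum_distrib_left
    by (intro sum.cong refl) (simp add: ac_simps flip: power_add)
  also have "q * ((1 - u / q) * (1 - u)) = (1 - u) * (q - u)"
    using assms by (simp add: field_simps)
  moreover have "q ^ k * expansion_coeff (u / q) u N k = u ^ k * expansion_coeff 1 q N k" for k
    using expansion_coeff_homogeneous[of q "u / q" u N k] expansion_coeff_homogeneous[of u 1 q N k] assms
    by (simp add: ac_simps)
  ultimately show ?thesis
    by (simp only: power_mult_distrib[symmetric])
qed

lemma expansion_step_diff:
  fixes q u :: "'a::field_char_0"
  assumes "q \<noteq> 0"
  shows "(\<Sum>k<N. of_nat N / of_nat (N - k) * expansion_coeff 1 q N k * u ^ k * step_diff q u (N - k))
       = (1 - q ^ N) * (1 - u ^ (2 * N))"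
proof -
  have "(\<Sum>k<N. of_nat N / of_nat (N - k) * expansion_coeff 1 q N k * u ^ k * step_diff q u (N - k))
      = (1 - u ^ N) * (1 - (q * u) ^ N) - (1 - u ^ N) * (q ^ N - u ^ N)"
    unfolding expansion_at_u_qu expansion_at_u_div_q[OF assms]
    by (simp add: step_diff_def sum_subtractf[symmetric] algebra_simps)
  also have "\<dots> = (1 - q ^ N) * (1 - u ^ (2 * N))"
    by (simp add: algebra_simps power_mult_distrib power_mult power2_eq_square)
  finally show ?thesis .
qed

lemma sum_antisymmetric_coeffs:
  fixes f :: "nat \<Rightarrow> 'a::comm_ring_1"
  assumes antisym: "\<And>l. l \<le> m \<Longrightarrow> f (2 * m + 2 - l) = - f l" and middle: "f (m + 1) = 0"
  shows "(\<Sum>i=0..2*m+2. f i * u ^ i) = (\<Sum>l=0..m. f l * (u ^ l - u ^ (2 * m + 2 - l)))"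
proof -
  have "(\<Sum>i=0..2*m+2. f i * u ^ i) = (\<Sum>i=0..m. f i * u ^ i) + (\<Sum>i=m+1..2*m+2. f i * u ^ i)"
    using sum.ub_add_nat[of 0 m "\<lambda>i. f i * u ^ i" "m + 2"] by (simp add: mult_2 add.assoc)
  also have "(\<Sum>i=m+1..2*m+2. f i * u ^ i) = f (m + 1) * u ^ (m + 1) + (\<Sum>i=Suc (m+1)..2*m+2. f i * u ^ i)"
    by (rule sum.atLeast_Suc_atMost) simp
  also have "Suc (m + 1) = m + 2"
    by simp
  also have "(\<Sum>i=m+2..2*m+2. f i * u ^ i) = (\<Sum>l=0..m. f (2 * m + 2 - l) * u ^ (2 * m + 2 - l))"
    by (rule sum.reindex_bij_witness[where i="\<lambda>l. 2 * m + 2 - l" and j="\<lambda>i. 2 * m + 2 - i"]) auto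
  also have "\<dots> = (\<Sum>l=0..m. - f l * u ^ (2 * m + 2 - l))"
    by (intro sum.cong refl) (metis antisym atLeastAtMost_iff mult_minus_left)
  finally show ?thesis
    using middle by (simp add: right_diff_distrib sum_subtractf sum_negf)
qed

definition ballot :: "nat \<Rightarrow> nat \<Rightarrow> 'a::comm_ring_1" where
  "ballot m l = (-1) ^ l * (of_nat (2 * m choose l) - (if 2 \<le> l then of_nat (2 * m choose (l - 2)) else 0))"

lemma ballot_antisym:
  assumes "l \<le> m"
  shows "ballot m (2 * m + 2 - l) = - ballot m l"
proof -
  have "(-1 :: 'a) ^ (2 * m + 2 - l) = (-1) ^ l"
    using assms by (simp add: minus_one_power_iff)
  moreover have "2 * m choose (2 * m + 2 - l - 2) = 2 * m choose l"
    using assms binomial_symmetric[of l "2 * m"] by (simp add: diff_diff_add)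
  moreover have "2 * m choose (2 * m + 2 - l) = (if 2 \<le> l then 2 * m choose (l - 2) else 0)"
    using assms binomial_symmetric[of "l - 2" "2 * m"] by (auto simp: numeral_2_eq_2)
  ultimately show ?thesis
    using assms by (simp add: ballot_def right_diff_distrib)
qed

lemma ballot_middle: "ballot m (m + 1) = 0"
proof (cases m)
  case (Suc k)
  then have "2 * m choose (m + 1) = 2 * m choose (m + 1 - 2)"
    using binomial_symmetric[of "m + 1" "2 * m"] by simp
  then show ?thesis
    using Suc by (simp add: ballot_def)
qed (simp add: ballot_def)

lemma ballot_generating_polynomial:
  "(\<Sum>i=0..2*m+2. ballot m i * u ^ i) = (1 - u ^ 2) * (1 - u) ^ (2 * m)"
proof -
  define g :: "nat \<Rightarrow> 'a" where "g i = (-1) ^ i * of_nat (2 * m choose i)" for i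
  have top: "2 * m + 2 = Suc (Suc (2 * m))" by simp
  have binomial: "(1 - u) ^ (2 * m) = (\<Sum>i=0..2*m. g i * u ^ i)"
  proof -
    have "(1 - u) ^ (2 * m) = (- u + 1) ^ (2 * m)"
      by simp
    also have "\<dots> = (\<Sum>i\<le>2*m. of_nat (2 * m choose i) * (- u) ^ i * 1 ^ (2 * m - i))"
      by (rule binomial_ring)
    finally show ?thesis
      unfolding atLeast0AtMost g_def power_minus[of u] by (simp add: ac_simps)
  qed
  have unshifted: "(\<Sum>i=0..2*m+2. g i * u ^ i) = (\<Sum>i=0..2*m. g i * u ^ i)"
    unfolding top sum.atLeast0_atMost_Suc by (simp add: g_def binomial_eq_0)
  have shifted: "(\<Sum>i=0..2*m+2. (if 2 \<le> i then g (i - 2) else 0) * u ^ i) = u ^ 2 * (\<Sum>i=0..2*m. g i * u ^ i)"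
    unfolding top sum.atLeast0_atMost_Suc_shift sum_distrib_left
    by (simp add: power2_eq_square ac_simps)
  have "ballot m i = g i - (if 2 \<le> i then g (i - 2) else 0)" for i
  proof (cases "2 \<le> i")
    case True
    then have "(-1 :: 'a) ^ i = (-1) ^ (i - 2)"
      by (simp add: minus_one_power_iff)
    with True show ?thesis
      by (simp add: ballot_def g_def right_diff_distrib)
  qed (simp add: ballot_def g_def)
  then have "(\<Sum>i=0..2*m+2. ballot m i * u ^ i)
      = (\<Sum>i=0..2*m+2. g i * u ^ i) - (\<Sum>i=0..2*m+2. (if 2 \<le> i then g (i - 2) else 0) * u ^ i)"
    by (simp add: left_diff_distrib sum_subtractf)
  then show ?thesis
    by (simp only: shifted unshifted binomial left_diff_distrib mult_1_left)
qed

lemma ballot_antisymmetric_sum: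
  "(\<Sum>l=0..m. ballot m l * (u ^ l - u ^ (2 * m + 2 - l))) = (1 - u ^ 2) * (1 - u) ^ (2 * m)"
  by (simp only: sum_antisymmetric_coeffs[OF ballot_antisym ballot_middle, symmetric]
                 ballot_generating_polynomial)

text \<open>(-1)^k P_(m,k) with its prefactor removed; see P_eq_Pcoeff.\<close>

definition Pcoeff :: "'a::field \<Rightarrow> nat \<Rightarrow> nat \<Rightarrow> 'a" where
  "Pcoeff q m k = (\<Sum>l=0..k. ballot m l / (1 - q ^ (m + 1 - l)) *
     (of_nat (m + 1 - l) / of_nat (m + 1 - k) * expansion_coeff 1 q (m + 1 - l) (k - l)))"

lemma sum_triangle_swap:
  "(\<Sum>k=0..(m::nat). \<Sum>l=0..k. f l (k - l)) = (\<Sum>l=0..m. \<Sum>i=0..m-l. f l i :: 'a::comm_monoid_add)"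
proof -
  have "{(l, i). l + i \<le> m} = Sigma {0..m} (\<lambda>l. {0..m-l})" by auto
  then show ?thesis
    using sum.triangle_reindex_eq[of "\<lambda>l i. f l i" m]
    by (simp add: atLeast0AtMost sum.Sigma split_def)
qed

lemma sum_Pcoeff_step_diff_regroup:
  fixes q u :: "'a::field"
  shows "(\<Sum>k=0..m. Pcoeff q m k * u ^ k * step_diff q u (m + 1 - k)) =
    (\<Sum>l=0..m. ballot m l / (1 - q ^ (m + 1 - l)) * u ^ l *
      (\<Sum>i<m + 1 - l. of_nat (m + 1 - l) / of_nat (m + 1 - l - i) * expansion_coeff 1 q (m + 1 - l) i *
        u ^ i * step_diff q u (m + 1 - l - i)))"
proof -
  define summand where "summand l i = ballot m l / (1 - q ^ (m + 1 - l)) * u ^ l *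
    (of_nat (m + 1 - l) / of_nat (m + 1 - l - i) * expansion_coeff 1 q (m + 1 - l) i * u ^ i *
     step_diff q u (m + 1 - l - i))" for l i
  have "Pcoeff q m k * u ^ k * step_diff q u (m + 1 - k) = (\<Sum>l=0..k. summand l (k - l))" if "k \<le> m" for k
    unfolding Pcoeff_def sum_distrib_right summand_def
  proof (intro sum.cong refl)
    fix l assume "l \<in> {0..k}"
    then have "m + 1 - l - (k - l) = m + 1 - k" and "u ^ k = u ^ l * u ^ (k - l)"
      using that by (auto simp flip: power_add)
    then show "ballot m l / (1 - q ^ (m + 1 - l)) *
        (of_nat (m + 1 - l) / of_nat (m + 1 - k) * expansion_coeff 1 q (m + 1 - l) (k - l)) * u ^ k *
        step_diff q u (m + 1 - k) = ballot m l / (1 - q ^ (m + 1 - l)) * u ^ l *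
        (of_nat (m + 1 - l) / of_nat (m + 1 - l - (k - l)) * expansion_coeff 1 q (m + 1 - l) (k - l) *
         u ^ (k - l) * step_diff q u (m + 1 - l - (k - l)))"
      by (simp only: ac_simps)
  qed
  then have "(\<Sum>k=0..m. Pcoeff q m k * u ^ k * step_diff q u (m + 1 - k))
      = (\<Sum>k=0..m. \<Sum>l=0..k. summand l (k - l))"
    by (intro sum.cong refl) simp
  also have "\<dots> = (\<Sum>l=0..m. \<Sum>i=0..m-l. summand l i)"
    by (rule sum_triangle_swap)
  also have "\<dots> = (\<Sum>l=0..m. \<Sum>i<m + 1 - l. summand l i)"
    by (intro sum.cong) auto
  finally show ?thesis
    by (simp only: summand_def sum_distrib_left)
qed

lemma Pcoeff_identity:
  fixes q u :: "'a::field_char_0"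
  assumes "q \<noteq> 0" and q_not_root: "\<And>j. j \<ge> 1 \<Longrightarrow> q ^ j \<noteq> 1"
  shows "(\<Sum>k=0..m. Pcoeff q m k * u ^ k * step_diff q u (m + 1 - k)) = (1 - u ^ 2) * (1 - u) ^ (2 * m)"
proof -
  have "ballot m l / (1 - q ^ (m + 1 - l)) * u ^ l * ((1 - q ^ (m + 1 - l)) * (1 - u ^ (2 * (m + 1 - l))))
      = ballot m l * (u ^ l - u ^ (2 * m + 2 - l))" if "l \<in> {0..m}" for l
  proof -
    have "2 * m + 2 - l = l + 2 * (m + 1 - l)"
      using that by simp
    then have "u ^ l * (1 - u ^ (2 * (m + 1 - l))) = u ^ l - u ^ (2 * m + 2 - l)"
      by (simp only: power_add right_diff_distrib mult_1_right)
    moreover have "1 - q ^ (m + 1 - l) \<noteq> 0"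
      using q_not_root[of "m + 1 - l"] that by auto
    ultimately show ?thesis
      by simp
  qed
  then show ?thesis
    unfolding sum_Pcoeff_step_diff_regroup expansion_step_diff[OF \<open>q \<noteq> 0\<close>]
      ballot_antisymmetric_sum[symmetric]
    by (rule sum.cong[OF refl])
qed

section \<open>Telescoping\<close>

lemma step_diff_shift:
  fixes q :: "'a::comm_ring_1"
  assumes "k \<le> m"
  shows "(1 - q ^ Suc n) ^ (m + 1 - k) * (1 - q ^ (Suc n + 1)) ^ (m + 1 - k) * q ^ (k * Suc n)
       - q ^ (m + 1) * ((1 - q ^ n) ^ (m + 1 - k) * (1 - q ^ (n + 1)) ^ (m + 1 - k) * q ^ (k * n))
       = (q ^ Suc n) ^ k * step_diff q (q ^ Suc n) (m + 1 - k)"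
proof -
  let ?j = "m + 1 - k" and ?u = "q ^ Suc n"
  have "m + 1 + k * n = ?j + Suc n * k"
    using assms by (simp add: algebra_simps)
  then have weight: "q ^ (m + 1) * q ^ (k * n) = q ^ ?j * ?u ^ k"
    unfolding power_mult[symmetric] power_add[symmetric] by (simp only:)
  have "q * (1 - q ^ n) = q - ?u"
    by (simp add: algebra_simps)
  have previous: "q ^ (m + 1) * ((1 - q ^ n) ^ ?j * (1 - q ^ (n + 1)) ^ ?j * q ^ (k * n))
      = (q - ?u) ^ ?j * (1 - ?u) ^ ?j * ?u ^ k"
  proof -
    have "q ^ (m + 1) * ((1 - q ^ n) ^ ?j * (1 - q ^ (n + 1)) ^ ?j * q ^ (k * n))
        = (q ^ (m + 1) * q ^ (k * n)) * ((1 - q ^ n) ^ ?j * (1 - q ^ (n + 1)) ^ ?j)"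
      by (simp only: ac_simps)
    also have "\<dots> = (q * (1 - q ^ n)) ^ ?j * (1 - ?u) ^ ?j * ?u ^ k"
      by (simp only: weight) (simp only: power_mult_distrib Suc_eq_plus1 ac_simps)
    finally show ?thesis
      by (simp only: \<open>q * (1 - q ^ n) = q - ?u\<close>)
  qed
  have "q ^ (k * Suc n) = ?u ^ k"
    by (simp only: power_mult[symmetric] mult.commute)
  moreover have "q ^ (Suc n + 1) = q * ?u"
    by simp
  ultimately show ?thesis
    unfolding previous step_diff_def power_mult_distrib
    by (simp only: right_diff_distrib ac_simps)
qed

lemma weighted_power_sum_Suc:
  fixes q :: "'a::comm_ring_1"
  shows "(\<Sum>i=1..Suc n. (1 - q ^ (2 * i)) * (1 - q ^ i) ^ (2 * m) * q ^ ((m + 1) * (Suc n - i)))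
       = q ^ (m + 1) * (\<Sum>i=1..n. (1 - q ^ (2 * i)) * (1 - q ^ i) ^ (2 * m) * q ^ ((m + 1) * (n - i)))
         + (1 - (q ^ Suc n) ^ 2) * (1 - q ^ Suc n) ^ (2 * m)"
proof -
  let ?F = "\<lambda>n i. (1 - q ^ (2 * i)) * (1 - q ^ i) ^ (2 * m) * q ^ ((m + 1) * (n - i))"
  have "?F (Suc n) i = q ^ (m + 1) * ?F n i" if "i \<in> {1..n}" for i
  proof -
    have "(m + 1) * (Suc n - i) = (m + 1) + (m + 1) * (n - i)"
      using that by (simp add: Suc_diff_le)
    then show ?thesis
      by (simp only: power_add ac_simps)
  qed
  then have "(\<Sum>i=1..n. ?F (Suc n) i) = q ^ (m + 1) * (\<Sum>i=1..n. ?F n i)"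
    unfolding sum_distrib_left by (rule sum.cong[OF refl])
  moreover have "?F (Suc n) (Suc n) = (1 - (q ^ Suc n) ^ 2) * (1 - q ^ Suc n) ^ (2 * m)"
    by (simp only: diff_self_eq_0 mult_0_right power_0 mult_1_right mult.commute[of 2 "Suc n"] power_mult)
  ultimately show ?thesis
    by (subst sum.nat_ivl_Suc') simp_all
qed

lemma weighted_q_power_sum:
  fixes q :: "'a::field_char_0"
  assumes "q \<noteq> 0" and "\<And>j. j \<ge> 1 \<Longrightarrow> q ^ j \<noteq> 1"
  shows "(\<Sum>i=1..n. (1 - q ^ (2 * i)) * (1 - q ^ i) ^ (2 * m) * q ^ ((m + 1) * (n - i)))
       = (\<Sum>k=0..m. Pcoeff q m k * ((1 - q ^ n) ^ (m + 1 - k) * (1 - q ^ (n + 1)) ^ (m + 1 - k) * q ^ (k * n)))"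
proof (induction n)
  case 0
  have "(1 - q ^ 0) ^ (m + 1 - k) = (0 :: 'a)" if "k \<in> {0..m}" for k
    using that by simp
  then show ?case
    by (simp add: sum.neutral)
next
  case (Suc n)
  let ?T = "\<lambda>n k. (1 - q ^ n) ^ (m + 1 - k) * (1 - q ^ (n + 1)) ^ (m + 1 - k) * q ^ (k * n)"
  have "Pcoeff q m k * (q ^ Suc n) ^ k * step_diff q (q ^ Suc n) (m + 1 - k)
      = Pcoeff q m k * ?T (Suc n) k - q ^ (m + 1) * (Pcoeff q m k * ?T n k)" if "k \<in> {0..m}" for k
    using step_diff_shift[of k m q n] that by (simp add: algebra_simps)
  then have increment: "(\<Sum>k=0..m. Pcoeff q m k * (q ^ Suc n) ^ k * step_diff q (q ^ Suc n) (m + 1 - k))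
      = (\<Sum>k=0..m. Pcoeff q m k * ?T (Suc n) k) - q ^ (m + 1) * (\<Sum>k=0..m. Pcoeff q m k * ?T n k)"
    by (simp add: sum_subtractf sum_distrib_left)
  have "(\<Sum>i=1..Suc n. (1 - q ^ (2 * i)) * (1 - q ^ i) ^ (2 * m) * q ^ ((m + 1) * (Suc n - i)))
      = q ^ (m + 1) * (\<Sum>k=0..m. Pcoeff q m k * ?T n k) + (1 - (q ^ Suc n) ^ 2) * (1 - q ^ Suc n) ^ (2 * m)"
    by (simp only: weighted_power_sum_Suc Suc.IH)
  also have "(1 - (q ^ Suc n) ^ 2) * (1 - q ^ Suc n) ^ (2 * m)
      = (\<Sum>k=0..m. Pcoeff q m k * (q ^ Suc n) ^ k * step_diff q (q ^ Suc n) (m + 1 - k))"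
    by (rule Pcoeff_identity[OF assms, symmetric])
  finally show ?case
    unfolding increment by simp
qed

section \<open>Lucas polynomials\<close>

definition qint :: "'a::comm_ring_1 \<Rightarrow> nat \<Rightarrow> 'a" where
  "qint q n = (\<Sum>a<n. q ^ a)"

lemma qint_Suc: "qint q (Suc n) = 1 + q * qint q n"
  unfolding qint_def sum.lessThan_Suc_shift sum_distrib_left by simp

lemma one_minus_power_eq_qint: "1 - q ^ n = (1 - q) * qint q n"
  by (simp add: qint_def one_diff_power_eq)

fun lucasU :: "'a::comm_ring_1 \<Rightarrow> nat \<Rightarrow> 'a poly" where
  "lucasU q 0 = 0"
| "lucasU q (Suc 0) = 1"
| "lucasU q (Suc (Suc j)) = smult (1 + q) (pCons 0 (lucasU q (Suc j)))
     - smult q (pCons 0 (pCons 0 (lucasU q j))) + smult ((1 - q) ^ 2) (pCons 0 (lucasU q j))"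

lemma poly_lucasU:
  assumes "\<alpha> + \<beta> = (1 + q) * w" and "\<alpha> * \<beta> = w * (q * w - (1 - q) ^ 2)"
  shows "poly (lucasU q j) w * (\<alpha> - \<beta>) = \<alpha> ^ j - \<beta> ^ j"
proof (induction j rule: induct_nat_012)
  case (ge2 j)
  have recurrence: "poly (lucasU q (Suc (Suc j))) w
      = (\<alpha> + \<beta>) * poly (lucasU q (Suc j)) w - \<alpha> * \<beta> * poly (lucasU q j) w"
    by (simp add: assms algebra_simps power2_eq_square)
  have "poly (lucasU q (Suc (Suc j))) w * (\<alpha> - \<beta>)
      = (\<alpha> + \<beta>) * (poly (lucasU q (Suc j)) w * (\<alpha> - \<beta>))
        - \<alpha> * \<beta> * (poly (lucasU q j) w * (\<alpha> - \<beta>))"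
    by (simp only: recurrence) (simp add: algebra_simps)
  also have "\<dots> = (\<alpha> + \<beta>) * (\<alpha> ^ Suc j - \<beta> ^ Suc j) - \<alpha> * \<beta> * (\<alpha> ^ j - \<beta> ^ j)"
    by (simp only: ge2)
  finally show ?case
    by (simp add: algebra_simps)
qed simp_all

lemma coeff_lucasU_Suc_Suc:
  "coeff (lucasU q (Suc (Suc j))) i =
     (if i = 0 then 0 else (1 + q) * coeff (lucasU q (Suc j)) (i - 1) + (1 - q) ^ 2 * coeff (lucasU q j) (i - 1))
     - (if i \<le> 1 then 0 else q * coeff (lucasU q j) (i - 2))"
  by (simp add: coeff_pCons' numeral_2_eq_2)

lemma coeff_lucasU_eq_0: "j \<le> i \<Longrightarrow> coeff (lucasU q j) i = 0"
proof (induction j arbitrary: i rule: induct_nat_012)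
  case (ge2 j)
  then show ?case
    unfolding coeff_lucasU_Suc_Suc by auto
qed (simp_all add: coeff_1)

lemma coeff_lucasU_top: "coeff (lucasU q j) (j - 1) = qint q j"
proof (induction j rule: induct_nat_012)
  case (ge2 j)
  have "qint q (Suc (Suc j)) = (1 + q) * qint q (Suc j) - q * qint q j"
    by (simp add: qint_Suc algebra_simps)
  with ge2 show ?case
    by (cases j) (simp_all add: coeff_lucasU_Suc_Suc coeff_lucasU_eq_0 qint_def)
qed (simp_all add: qint_def)

lemma step_diff_lucasU:
  fixes q u :: "'a::field"
  assumes "u \<noteq> 0"
  shows "step_diff q u (Suc j) = (1 - q) * (1 - u ^ 2) * u ^ j * poly (lucasU q (Suc j)) ((1 - u) ^ 2 / u)"
proof -
  define w where "w = (1 - u) ^ 2 / u"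
  define \<alpha> where "\<alpha> = (1 - u) * (1 - q * u) / u"
  define \<beta> where "\<beta> = (1 - u) * (q - u) / u"
  have "\<alpha> + \<beta> = (1 + q) * w" and "\<alpha> * \<beta> = w * (q * w - (1 - q) ^ 2)"
    and difference: "\<alpha> - \<beta> = (1 - q) * (1 - u ^ 2) / u"
    using assms by (simp_all add: \<alpha>_def \<beta>_def w_def field_simps power2_eq_square)
  have "step_diff q u (Suc j) = u ^ Suc j * (\<alpha> ^ Suc j - \<beta> ^ Suc j)"
    using assms by (simp add: step_diff_def \<alpha>_def \<beta>_def power_divide right_diff_distrib)
  also have "\<dots> = u ^ Suc j * (poly (lucasU q (Suc j)) w * (\<alpha> - \<beta>))"
    by (simp only: poly_lucasU[OF \<open>\<alpha> + \<beta> = _\<close> \<open>\<alpha> * \<beta> = _\<close>])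
  also have "\<dots> = (1 - q) * (1 - u ^ 2) * u ^ j * poly (lucasU q (Suc j)) w"
    using assms by (simp add: difference field_simps)
  finally show ?thesis
    unfolding w_def .
qed

lemma inj_on_power2_one_minus_divide:
  "inj_on (\<lambda>n::nat. (1 - of_nat n) ^ 2 / (of_nat n :: 'a::field_char_0)) {2..}"
proof (rule inj_onI)
  fix a b :: nat
  assume "a \<in> {2..}" "b \<in> {2..}" and "(1 - of_nat a) ^ 2 / (of_nat a :: 'a) = (1 - of_nat b) ^ 2 / of_nat b"
  then have "(of_nat a - of_nat b) * (of_nat (a * b) - 1 :: 'a) = 0"
    by (simp add: field_simps power2_eq_square)
  moreover have "(of_nat (a * b) :: 'a) \<noteq> 1"
    using \<open>a \<in> {2..}\<close> \<open>b \<in> {2..}\<close> by (simp only: of_nat_eq_1_iff) auto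
  ultimately show "a = b"
    by simp
qed

lemma poly_sum_Pcoeff_lucasU:
  fixes q u :: "'a::field_char_0"
  assumes "q \<noteq> 0" and "\<And>j. j \<ge> 1 \<Longrightarrow> q ^ j \<noteq> 1" and "u \<noteq> 0" and "u ^ 2 \<noteq> 1"
  shows "(\<Sum>k=0..m. (1 - q) * Pcoeff q m k * poly (lucasU q (m + 1 - k)) ((1 - u) ^ 2 / u)) = ((1 - u) ^ 2 / u) ^ m"
proof -
  let ?w = "(1 - u) ^ 2 / u"
  have "u ^ m * (1 - u ^ 2) * (\<Sum>k=0..m. (1 - q) * Pcoeff q m k * poly (lucasU q (m + 1 - k)) ?w)
      = (\<Sum>k=0..m. Pcoeff q m k * u ^ k * step_diff q u (m + 1 - k))"
    unfolding sum_distrib_left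
  proof (intro sum.cong refl)
    fix k assume "k \<in> {0..m}"
    then have "m + 1 - k = Suc (m - k)" and "u ^ m = u ^ k * u ^ (m - k)"
      by (auto simp flip: power_add)
    then show "u ^ m * (1 - u ^ 2) * ((1 - q) * Pcoeff q m k * poly (lucasU q (m + 1 - k)) ?w)
        = Pcoeff q m k * u ^ k * step_diff q u (m + 1 - k)"
      by (simp add: step_diff_lucasU[OF \<open>u \<noteq> 0\<close>] ac_simps)
  qed
  also have "\<dots> = (1 - u ^ 2) * (1 - u) ^ (2 * m)"
    by (rule Pcoeff_identity[OF assms(1,2)])
  also have "\<dots> = u ^ m * (1 - u ^ 2) * ?w ^ m"
    using \<open>u \<noteq> 0\<close> by (simp add: power_mult power_divide)
  finally show ?thesis
    using assms(3,4) by simp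
qed

lemma sum_Pcoeff_lucasU:
  fixes q :: "'a::field_char_0"
  assumes "q \<noteq> 0" and "\<And>j. j \<ge> 1 \<Longrightarrow> q ^ j \<noteq> 1"
  shows "(\<Sum>k=0..m. smult ((1 - q) * Pcoeff q m k) (lucasU q (m + 1 - k))) = monom 1 m"
proof -
  let ?R = "(\<Sum>k=0..m. smult ((1 - q) * Pcoeff q m k) (lucasU q (m + 1 - k))) - monom 1 m"
  let ?w = "\<lambda>n::nat. (1 - of_nat n) ^ 2 / (of_nat n :: 'a)"
  have "poly ?R (?w n) = 0" if "n \<in> {2..}" for n
  proof -
    have "(of_nat n :: 'a) \<noteq> 0" and "(of_nat n :: 'a) ^ 2 \<noteq> 1"
      using that by (simp_all flip: of_nat_power)
    then show ?thesis
      using poly_sum_Pcoeff_lucasU[OF assms, of "of_nat n" m] by (simp add: poly_sum poly_monom)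
  qed
  then have "?w ` {2..} \<subseteq> {w. poly ?R w = 0}"
    by blast
  moreover have "infinite (?w ` {2..})"
    using finite_imageD[OF _ inj_on_power2_one_minus_divide] infinite_Ici by blast
  ultimately have "?R = 0"
    using poly_roots_finite finite_subset by blast
  then show ?thesis
    by simp
qed

lemma Pcoeff_recurrence:
  fixes q :: "'a::field_char_0"
  assumes "q \<noteq> 0" and "\<And>j. j \<ge> 1 \<Longrightarrow> q ^ j \<noteq> 1" and "t \<le> m"
  shows "(1 - q) * Pcoeff q m t * qint q (m + 1 - t)
       = (if t = 0 then 1 else 0) - (\<Sum>k<t. (1 - q) * Pcoeff q m k * coeff (lucasU q (m + 1 - k)) (m - t))"
proof -
  let ?c = "\<lambda>k. (1 - q) * Pcoeff q m k * coeff (lucasU q (m + 1 - k)) (m - t)"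
  have "(if t = 0 then 1 else 0) = (\<Sum>k=0..m. ?c k)"
    using arg_cong[OF sum_Pcoeff_lucasU[OF assms(1,2)], of "\<lambda>p. coeff p (m - t)"] \<open>t \<le> m\<close>
    by (auto simp: coeff_sum)
  also have "{0..m} = {..<t} \<union> {t..m}"
    using \<open>t \<le> m\<close> by auto
  also have "(\<Sum>k\<in>{..<t} \<union> {t..m}. ?c k) = (\<Sum>k<t. ?c k) + (\<Sum>k=t..m. ?c k)"
    by (rule sum.union_disjoint) auto
  also have "(\<Sum>k=t..m. ?c k) = ?c t + (\<Sum>k=Suc t..m. ?c k)"
    using \<open>t \<le> m\<close> by (rule sum.atLeast_Suc_atMost)
  also have "(\<Sum>k=Suc t..m. ?c k) = 0"
    by (intro sum.neutral) (auto simp: coeff_lucasU_eq_0)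
  also have "?c t = (1 - q) * Pcoeff q m t * qint q (m + 1 - t)"
    using coeff_lucasU_top[of q "m + 1 - t"] \<open>t \<le> m\<close> by (simp add: Suc_diff_le)
  finally have "(if t = 0 then 1 else 0) = (\<Sum>k<t. ?c k) + (1 - q) * Pcoeff q m t * qint q (m + 1 - t)"
    by simp
  then show ?thesis
    by (simp add: eq_diff_eq')
qed

section \<open>Integrality over Z[q]\<close>

lemma of_nat_fract: "(of_nat n :: 'a::idom fract) = to_fract (of_nat n)"
  by (induction n) simp_all

instance fract :: ("{idom, ring_char_0}") field_char_0
  by standard (auto intro!: injI simp: of_nat_fract)

lemma to_fract_power: "to_fract (x ^ n) = to_fract x ^ n"
  by (induction n) simp_all

lemma qq_power: "qq ^ j = to_fract (monom 1 (2 * j))"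
  by (simp add: qq_def qh_def monom_altdef flip: power_mult to_fract_power)

lemma qq_nonzero: "qq \<noteq> 0"
  by (simp add: qq_def qh_def)

lemma qq_power_ne_1:
  assumes "j \<ge> 1"
  shows "qq ^ j \<noteq> 1"
proof
  assume "qq ^ j = 1"
  then have "monom (1::int) (2 * j) = 1"
    by (simp add: qq_power flip: to_fract_1)
  then show False
    using assms degree_monom_eq[of "1::int" "2 * j"] by simp
qed

lemma poly_in_q_add: "poly_in_q (p + r) = poly_in_q p + poly_in_q r"
  by (simp add: poly_in_q_def pcompose_add)

lemma poly_in_q_diff: "poly_in_q (p - r) = poly_in_q p - poly_in_q r"
  by (simp add: poly_in_q_def pcompose_diff)

lemma poly_in_q_mult: "poly_in_q (p * r) = poly_in_q p * poly_in_q r"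
  by (simp add: poly_in_q_def pcompose_mult)

lemma poly_in_q_1: "poly_in_q 1 = 1"
  by (simp add: poly_in_q_def pcompose_1)

lemma poly_in_q_power: "poly_in_q (p ^ n) = poly_in_q p ^ n"
  by (induction n) (simp_all add: poly_in_q_1 poly_in_q_mult)

lemma poly_in_q_X: "poly_in_q [:0, 1:] = qq"
  by (simp add: poly_in_q_def qq_def qh_def pcompose_pCons power2_eq_square flip: to_fract_mult)

definition qideal :: "nat \<Rightarrow> rf set" where
  "qideal r = range (\<lambda>p. (1 - qq) ^ (2 * r) * poly_in_q p)"

lemma qidealI: "z = (1 - qq) ^ (2 * r) * poly_in_q p \<Longrightarrow> z \<in> qideal r"
  unfolding qideal_def by blast

lemma qidealE:
  assumes "z \<in> qideal r"
  obtains p where "z = (1 - qq) ^ (2 * r) * poly_in_q p"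
  using assms unfolding qideal_def by blast

lemma qideal_0: "0 \<in> qideal r"
  by (rule qidealI[of _ _ 0]) (simp add: poly_in_q_def)

lemma qideal_1: "1 \<in> qideal 0"
  by (rule qidealI[of _ _ 1]) (simp add: poly_in_q_1)

lemma qq_in_qideal: "qq \<in> qideal 0"
  by (rule qidealI[of _ _ "[:0, 1:]"]) (simp add: poly_in_q_X)

lemma qideal_generator: "(1 - qq) ^ 2 \<in> qideal 1"
  by (rule qidealI[of _ _ 1]) (simp add: poly_in_q_1)

lemma qideal_add:
  assumes "a \<in> qideal r" and "b \<in> qideal r"
  shows "a + b \<in> qideal r"
proof -
  obtain p p' where "a = (1 - qq) ^ (2 * r) * poly_in_q p" and "b = (1 - qq) ^ (2 * r) * poly_in_q p'"
    using assms by (meson qidealE)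
  then show ?thesis
    by (intro qidealI[of _ _ "p + p'"]) (simp add: poly_in_q_add distrib_left)
qed

lemma qideal_diff:
  assumes "a \<in> qideal r" and "b \<in> qideal r"
  shows "a - b \<in> qideal r"
proof -
  obtain p p' where "a = (1 - qq) ^ (2 * r) * poly_in_q p" and "b = (1 - qq) ^ (2 * r) * poly_in_q p'"
    using assms by (meson qidealE)
  then show ?thesis
    by (intro qidealI[of _ _ "p - p'"]) (simp add: poly_in_q_diff right_diff_distrib)
qed

lemma qideal_mult:
  assumes "a \<in> qideal r" and "b \<in> qideal s"
  shows "a * b \<in> qideal (r + s)"
proof -
  obtain p p' where "a = (1 - qq) ^ (2 * r) * poly_in_q p" and "b = (1 - qq) ^ (2 * s) * poly_in_q p'"
    using assms by (meson qidealE)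
  then show ?thesis
    by (intro qidealI[of _ _ "p * p'"]) (simp add: poly_in_q_mult power_add distrib_left ac_simps)
qed

lemma qideal_antimono:
  assumes "s \<le> r" and "a \<in> qideal r"
  shows "a \<in> qideal s"
proof -
  obtain p where "a = (1 - qq) ^ (2 * r) * poly_in_q p"
    using assms(2) by (rule qidealE)
  moreover have "(1 - qq) ^ (2 * r) = (1 - qq) ^ (2 * s) * poly_in_q ([:1, -1:] ^ (2 * (r - s)))"
  proof -
    have "[:1, -1:] = 1 - [:0, 1 :: int:]"
      by (simp add: one_pCons)
    then have "poly_in_q [:1, -1:] = 1 - qq"
      by (simp only: poly_in_q_diff poly_in_q_1 poly_in_q_X)
    moreover have "2 * r = 2 * s + 2 * (r - s)"
      using assms(1) by simp
    ultimately show ?thesis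
      by (simp only: poly_in_q_power power_add)
  qed
  ultimately show ?thesis
    by (intro qidealI[of _ _ "[:1, -1:] ^ (2 * (r - s)) * p"]) (simp add: poly_in_q_mult ac_simps)
qed

lemma qideal_sum: "(\<And>i. i \<in> A \<Longrightarrow> f i \<in> qideal r) \<Longrightarrow> sum f A \<in> qideal r"
  by (induction A rule: infinite_finite_induct) (auto intro: qideal_0 qideal_add)

lemma qideal_prod: "(\<And>i. i \<in> A \<Longrightarrow> f i \<in> qideal 0) \<Longrightarrow> prod f A \<in> qideal 0"
  by (induction A rule: infinite_finite_induct) (auto intro: qideal_1 qideal_mult[where r=0 and s=0, simplified])

lemma qideal_power: "a \<in> qideal 0 \<Longrightarrow> a ^ n \<in> qideal 0"
  by (induction n) (auto intro: qideal_1 qideal_mult[where r=0 and s=0, simplified])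

lemma qint_in_qideal: "qint qq n \<in> qideal 0"
  unfolding qint_def by (intro qideal_sum qideal_power qq_in_qideal)

lemma coeff_lucasU_in_qideal: "coeff (lucasU qq j) i \<in> qideal (j - 1 - i)"
proof (induction j arbitrary: i rule: induct_nat_012)
  case 1
  show ?case
    by (simp add: coeff_1 qideal_0 qideal_1)
next
  case (ge2 j)
  have "(1 + qq) * coeff (lucasU qq (Suc j)) (i - 1) \<in> qideal (j - (i - 1))"
    using qideal_mult[OF qideal_add[OF qideal_1 qq_in_qideal] ge2(2)[of "i - 1"]] by simp
  moreover have "(1 - qq) ^ 2 * coeff (lucasU qq j) (i - 1) \<in> qideal (1 + (j - 1 - (i - 1)))"
    by (rule qideal_mult[OF qideal_generator ge2(1)])
  moreover have "qq * coeff (lucasU qq j) (i - 2) \<in> qideal (j - 1 - (i - 2))"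
    using qideal_mult[OF qq_in_qideal ge2(1)[of "i - 2"]] by simp
  ultimately show ?case
    unfolding coeff_lucasU_Suc_Suc
    by (auto intro!: qideal_diff qideal_add qideal_0 elim!: qideal_antimono[rotated])
qed (simp add: qideal_0)

lemma Pcoeff_scaled_in_qideal:
  assumes "t \<le> m"
  shows "(1 - qq) * Pcoeff qq m t * (\<Prod>i=0..t. qint qq (m + 1 - i)) \<in> qideal t"
  using assms
proof (induction t rule: less_induct)
  case (less t)
  let ?K = "\<lambda>a b. \<Prod>i\<in>{a..<b}. qint qq (m + 1 - i)"
  let ?D = "\<lambda>k. (1 - qq) * Pcoeff qq m k * ?K 0 (Suc k)"
  have K_split: "?K 0 t = ?K 0 (Suc k) * ?K (Suc k) t" if "k < t" for k
    using that by (intro prod.atLeastLessThan_concat[symmetric]) auto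
  have "(1 - qq) * Pcoeff qq m t * (\<Prod>i=0..t. qint qq (m + 1 - i))
      = ((1 - qq) * Pcoeff qq m t * qint qq (m + 1 - t)) * ?K 0 t"
    by (simp add: atLeastLessThanSuc_atLeastAtMost[symmetric] ac_simps)
  also have "\<dots> = ((if t = 0 then 1 else 0)
      - (\<Sum>k<t. (1 - qq) * Pcoeff qq m k * coeff (lucasU qq (m + 1 - k)) (m - t))) * ?K 0 t"
    by (simp only: Pcoeff_recurrence[OF qq_nonzero qq_power_ne_1 less.prems])
  also have "\<dots> = (if t = 0 then 1 else 0) * ?K 0 t
      - (\<Sum>k<t. ?D k * (coeff (lucasU qq (m + 1 - k)) (m - t) * ?K (Suc k) t))"
    unfolding left_diff_distrib[of "if t = 0 then 1 else 0"] sum_distrib_right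
    by (intro arg_cong2[where f = minus] refl sum.cong) (simp_all only: lessThan_iff K_split mult_ac)
  also have "\<dots> \<in> qideal t"
  proof (intro qideal_diff qideal_sum)
    show "(if t = 0 then 1 else 0) * ?K 0 t \<in> qideal t"
      by (simp add: qideal_0 qideal_1)
    fix k assume "k \<in> {..<t}"
    then have "?D k \<in> qideal k"
      using less by (simp add: atLeastLessThanSuc_atLeastAtMost)
    moreover have "coeff (lucasU qq (m + 1 - k)) (m - t) * ?K (Suc k) t \<in> qideal (t - k)"
      using qideal_mult[OF coeff_lucasU_in_qideal[of "m + 1 - k" "m - t"] qideal_prod[OF qint_in_qideal]]
        \<open>k \<in> {..<t}\<close> less.prems by (simp add: Suc_diff_le)
    ultimately show "?D k * (coeff (lucasU qq (m + 1 - k)) (m - t) * ?K (Suc k) t) \<in> qideal t"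
      using qideal_mult \<open>k \<in> {..<t}\<close> by fastforce
  qed
  finally show ?case .
qed

section \<open>The polynomials P and the sums S\<close>

lemma ibinom_of_nat: "ibinom (int a) (int b) = int (a choose b)"
  by (simp add: ibinom_def)

lemma ballot_eq_ibinom:
  "ballot m l = (-1) ^ l * of_int (ibinom (2 * int m) (int l) - ibinom (2 * int m) (int l - 2))"
proof -
  have "ibinom (2 * int m) (int l - 2) = (if 2 \<le> l then int (2 * m choose (l - 2)) else 0)"
  proof (cases "2 \<le> l")
    case True
    then have "ibinom (2 * int m) (int l - 2) = ibinom (int (2 * m)) (int (l - 2))"
      by (simp add: of_nat_diff)
    with True show ?thesis
      by (simp only: ibinom_of_nat if_True)
  qed (simp add: ibinom_def)
  then show ?thesis
    using ibinom_of_nat[of "2 * m" l] by (simp add: ballot_def)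
qed

lemma expansion_coeff_eq_ibinom_sum:
  fixes q :: "'a::field_char_0"
  assumes "l \<le> k" and "k \<le> m"
  shows "(\<Sum>i=0..k-l. of_int (int m - int l + 1) / of_int (int m - int k + 1)
            * of_int (ibinom (int m - int k + int i) (int i))
            * of_int (ibinom (int m - int l - int i) (int k - int l - int i)) * q ^ (k - l - i))
       = of_nat (m + 1 - l) / of_nat (m + 1 - k) * expansion_coeff 1 q (m + 1 - l) (k - l)"
  unfolding expansion_coeff_def sum_distrib_left
proof (intro sum.cong refl)
  fix i assume "i \<in> {0..k-l}"
  then have "int m - int l + 1 = int (m + 1 - l)" "int m - int k + 1 = int (m + 1 - k)"
    "int m - int k + int i = int (m + 1 - l - 1 - (k - l) + i)" "int m - int l - int i = int (m + 1 - l - 1 - i)"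
    "int k - int l - int i = int (k - l - i)"
    using assms by auto
  then show "of_int (int m - int l + 1) / of_int (int m - int k + 1)
            * of_int (ibinom (int m - int k + int i) (int i))
            * of_int (ibinom (int m - int l - int i) (int k - int l - int i)) * q ^ (k - l - i)
       = of_nat (m + 1 - l) / of_nat (m + 1 - k) * (of_nat ((m + 1 - l - 1 - (k - l) + i) choose i)
            * of_nat ((m + 1 - l - 1 - i) choose (k - l - i)) * 1 ^ i * q ^ (k - l - i))"
    by (simp only: ibinom_of_nat of_int_of_nat_eq) simp
qed

lemma P_summand_eq:
  assumes "l \<le> k" and "k \<le> m"
  shows "(-1) ^ k * ((-1) ^ (k - l) / (1 - qq ^ (m + 1 - l))
        * of_int (ibinom (2 * int m) (int l) - ibinom (2 * int m) (int l - 2))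
        * (\<Sum>i=0..k-l. of_int (int m - int l + 1) / of_int (int m - int k + 1)
             * of_int (ibinom (int m - int k + int i) (int i))
             * of_int (ibinom (int m - int l - int i) (int k - int l - int i))
             * qq ^ (k - l - i)))
      = ballot m l / (1 - qq ^ (m + 1 - l)) *
          (of_nat (m + 1 - l) / of_nat (m + 1 - k) * expansion_coeff 1 qq (m + 1 - l) (k - l))"
proof -
  have sign: "(-1) ^ k * (-1) ^ (k - l) = ((-1) ^ l :: rf)"
    using assms by (simp add: minus_one_power_iff)
  have "(-1) ^ k * ((-1) ^ (k - l) / d * x * y) = (-1) ^ l * x / d * y" for d x y :: rf
    by (simp only: sign[symmetric] times_divide_eq_left times_divide_eq_right mult.assoc)
  then show ?thesis
    using expansion_coeff_eq_ibinom_sum[OF assms, where q = qq] by (simp only: ballot_eq_ibinom)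
qed

lemma P_eq_Pcoeff:
  assumes "k \<le> m"
  shows "(-1) ^ k * P m k = (\<Prod>j=0..k. 1 - qq ^ (m + 1 - j)) / (1 - qq) ^ (3 * k) * Pcoeff qq m k"
  unfolding P_def Pcoeff_def
    mult.left_commute[of "(-1) ^ k" "(\<Prod>j=0..k. 1 - qq ^ (m + 1 - j)) / (1 - qq) ^ (3 * k)"]
    sum_distrib_left[of "(-1) ^ k"]
  by (rule arg_cong2[where f = times], rule refl, rule sum.cong[OF refl], rule P_summand_eq)
     (use assms in auto)

lemma P_polynomial:
  assumes "t \<le> m"
  shows "\<exists>p. P m t = poly_in_q p"
proof -
  let ?K = "\<Prod>i=0..t. qint qq (m + 1 - i)"
  obtain p where p: "(1 - qq) * Pcoeff qq m t * ?K = (1 - qq) ^ (2 * t) * poly_in_q p"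
    using Pcoeff_scaled_in_qideal[OF assms] by (rule qidealE)
  have factor: "(\<Prod>j=0..t. 1 - qq ^ (m + 1 - j)) = (1 - qq) ^ Suc t * ?K"
    by (simp add: one_minus_power_eq_qint prod.distrib)
  have "(-1) ^ t * P m t = ((1 - qq) * Pcoeff qq m t * ?K) * (1 - qq) ^ t / (1 - qq) ^ (3 * t)"
    by (simp only: P_eq_Pcoeff[OF assms] factor) (simp only: power_Suc times_divide_eq_left times_divide_eq_right mult_ac)
  also have "\<dots> = poly_in_q p"
  proof -
    have "(1 - qq) ^ (2 * t) * (1 - qq) ^ t = (1 - qq) ^ (3 * t)"
      by (simp flip: power_add)
    moreover have "1 - qq \<noteq> 0"
      using qq_power_ne_1[of 1] by simp
    ultimately show ?thesis
      unfolding p by (simp add: ac_simps)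
  qed
  finally have "P m t = (-1) ^ t * poly_in_q p"
    by (metis minus_one_mult_self mult.assoc mult_1)
  also have "\<dots> = poly_in_q ((-1) ^ t * p)"
    by (simp only: poly_in_q_mult poly_in_q_power) (simp add: poly_in_q_def pcompose_uminus pcompose_1)
  finally show ?thesis ..
qed

lemma S_odd_eq:
  "S (2 * m + 1) n = (\<Sum>i=1..n. (1 - qq ^ (2 * i)) * (1 - qq ^ i) ^ (2 * m) * qq ^ ((m + 1) * (n - i)))
                      / ((1 - qq ^ 2) * (1 - qq) ^ (2 * m))"
proof -
  have qh_power: "qh ^ ((2 * m + 1 + 1) * j) = qq ^ ((m + 1) * j)" for j
  proof -
    have "(2 * m + 1 + 1) * j = 2 * ((m + 1) * j)"
      by simp
    then show ?thesis
      by (simp only: qq_def power_mult)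
  qed
  show ?thesis
    unfolding S_def sum_divide_distrib
    by (intro sum.cong refl) (simp only: qh_power add_diff_cancel_right' power_divide,
        simp only: times_divide_eq_left times_divide_eq_right divide_divide_eq_left mult_ac)
qed

lemma S_odd_eq_Pcoeff_sum:
  "S (2 * m + 1) n = (\<Sum>k=0..m. Pcoeff qq m k / ((1 - qq ^ 2) * (1 - qq) ^ (2 * m)) *
      ((1 - qq ^ n) ^ (m + 1 - k) * (1 - qq ^ (n + 1)) ^ (m + 1 - k) * qq ^ (k * n)))"
  by (simp only: S_odd_eq weighted_q_power_sum[OF qq_nonzero qq_power_ne_1])
     (simp add: sum_divide_distrib ac_simps)

lemma P_term_eq_Pcoeff:
  assumes "k \<le> m"
  shows "(-1) ^ k * P m k / ((1 - qq ^ 2) * (1 - qq) powi (2 * int m - 3 * int k) * (\<Prod>i=0..k. 1 - qq ^ (m + 1 - i)))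
       = Pcoeff qq m k / ((1 - qq ^ 2) * (1 - qq) ^ (2 * m))"
proof -
  have "1 - qq \<noteq> 0" and "1 - qq ^ 2 \<noteq> 0" and "(\<Prod>i=0..k. 1 - qq ^ (m + 1 - i)) \<noteq> 0"
    using qq_power_ne_1 assms by (force simp: prod_zero_iff)+
  moreover have "(1 - qq) powi (2 * int m - 3 * int k) \<noteq> 0"
    using \<open>1 - qq \<noteq> 0\<close> by simp
  moreover have "(1 - qq) powi (2 * int m - 3 * int k) * (1 - qq) ^ (3 * k) = (1 - qq) ^ (2 * m)"
    using \<open>1 - qq \<noteq> 0\<close> by (simp flip: power_int_of_nat power_int_add)
  ultimately show ?thesis
    unfolding P_eq_Pcoeff[OF assms] by (simp only: flip: \<open>_ * _ = (1 - qq) ^ (2 * m)\<close>) (simp add: field_simps)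
qed

theorem theorem1p1:
  fixes m n :: nat
  assumes "n \<ge> 1"
  shows "(\<forall>s \<le> m. \<exists>p :: int poly. P m s = poly_in_q p) \<and>
         S (2*m+1) n = (\<Sum>k=0..m. (-1) ^ k * P m k *
            ((1 - qq ^ n) ^ (m + 1 - k) * (1 - qq ^ (n + 1)) ^ (m + 1 - k) * qq ^ (k * n)) /
            ((1 - qq ^ 2) * (1 - qq) powi (2 * int m - 3 * int k) *
             (\<Prod>i=0..k. 1 - qq ^ (m + 1 - i))))"
proof
  show "\<forall>s \<le> m. \<exists>p :: int poly. P m s = poly_in_q p"
    using P_polynomial by blast
  show "S (2*m+1) n = (\<Sum>k=0..m. (-1) ^ k * P m k *
            ((1 - qq ^ n) ^ (m + 1 - k) * (1 - qq ^ (n + 1)) ^ (m + 1 - k) * qq ^ (k * n)) /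
            ((1 - qq ^ 2) * (1 - qq) powi (2 * int m - 3 * int k) *
             (\<Prod>i=0..k. 1 - qq ^ (m + 1 - i))))"
    unfolding S_odd_eq_Pcoeff_sum
    by (intro sum.cong refl) (simp only: P_term_eq_Pcoeff[symmetric] atLeastAtMost_iff,
        simp only: times_divide_eq_left times_divide_eq_right mult_ac)
qed

end
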